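(* Let $r$ and $d$ be positive integers, let $\operatorname{Tv}(d,r)=(d+1)(r-1)+1$, and let $S\subset\mathbb{R}^d$ be a finite set of at least $3\operatorname{Tv}(d,r)-1$ points. Then the Tverberg $r$-partition graph $G_T[S,r]$ is connected.
   Context: A partition of a finite set $S$ into $r$ parts is a collection of $r$ nonempty pairwise disjoint subsets $P_1,\dots,P_r$ (unordered) whose union is $S$. For a finite $S\subset\mathbb{R}^d$, a Tverberg partition of $S$ into $r$ parts is a partition $P_1,\dots,P_r$ of $S$ into $r$ parts with $\bigcap_{j=1}^r\operatorname{conv}(P_j)\neq\emptyset$. For two partitions $P,P'$ of $S$, the partition distance $D(P,P')$ is the minimum number of elements of $S$ that must be removed so that $P$ and $P'$ restricted to the remaining elements coincide (equivalently, the minimum number of elements that must be moved from one part to another to transform $P$ into $P'$). The Tverberg $r$-partition graph $G_T[S,r]$ has as vertices all Tverberg partitions of $S$ into $r$ parts, with an edge between $P$ and $P'$ if and only if $D(P,P')=1$. *)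

theory Defs
  imports "HOL-Analysis.Analysis"
begin

definition is_partition :: "'a set \<Rightarrow> nat \<Rightarrow> 'a set set \<Rightarrow> bool" where
  "is_partition S r P \<longleftrightarrow>
     (\<forall>B\<in>P. B \<noteq> {}) \<and>
     (\<forall>B\<in>P. \<forall>C\<in>P. B \<noteq> C \<longrightarrow> B \<inter> C = {}) \<and>
     \<Union>P = S \<and> finite P \<and> card P = r"

definition tverberg_partition :: "('a::real_vector) set \<Rightarrow> nat \<Rightarrow> 'a set set \<Rightarrow> bool" where
  "tverberg_partition S r P \<longleftrightarrow> is_partition S r P \<and> (\<Inter>B\<in>P. convex hull B) \<noteq> {}"

definition restrict_partition :: "'a set set \<Rightarrow> 'a set \<Rightarrow> 'a set set" where
  "restrict_partition P T = (\<lambda>B. B \<inter> T) ` P - {{}}"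

definition partition_distance :: "'a set \<Rightarrow> 'a set set \<Rightarrow> 'a set set \<Rightarrow> nat" where
  "partition_distance S P P' =
     (LEAST k. \<exists>X. X \<subseteq> S \<and> card X = k \<and>
                   restrict_partition P (S - X) = restrict_partition P' (S - X))"

definition Tv :: "nat \<Rightarrow> nat \<Rightarrow> nat" where
  "Tv d r = (d + 1) * (r - 1) + 1"

definition tverberg_graph_edges :: "('a::real_vector) set \<Rightarrow> nat \<Rightarrow> ('a set set \<times> 'a set set) set" where
  "tverberg_graph_edges S r =
     {(P, P'). tverberg_partition S r P \<and> tverberg_partition S r P' \<and>
               partition_distance S P P' = 1}"

definition tverberg_graph_connected :: "('a::real_vector) set \<Rightarrow> nat \<Rightarrow> bool" where
  "tverberg_graph_connected S r \<longleftrightarrow>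
     (\<forall>P P'. tverberg_partition S r P \<longrightarrow> tverberg_partition S r P' \<longrightarrow>
              (P, P') \<in> (tverberg_graph_edges S r)\<^sup>*)"

end

theory Submission
  imports Defs
begin

(* An r-partition of S is encoded by a labelling f of S with labels < r. A Tverberg labelling
   has a core C of at most Tv(d,r) points whose blocks still share a point: conic Caratheodory
   applied to the Tv(d,r) equations "block weights sum to 1, block barycentres agree".
   Relabelling the points outside a core one at a time is a walk in G_T[S,r].
   For two Tverberg partitions with cores C and C', the bound |S| >= 3 Tv(d,r) - 1 leaves a set K
   of Tv(d,r) points missing C' and meeting C in at most one point. By Tverberg's theorem
   (Sarkaria's tensor trick plus the colorful Caratheodory theorem) K has a Tverberg labelling h,
   which after permuting labels agrees with the first labelling on K \<inter> C. Relabel K by h (core C),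
   switch the rest of S to the second labelling (core K), then relabel K back (core C'). *)

lemma homogeneous_system_nontrivial_solution:
  fixes A :: "'e \<Rightarrow> 'k \<Rightarrow> real"
  assumes "finite E" "finite U" "card E < card U"
  shows "\<exists>c. (\<exists>k\<in>U. c k \<noteq> 0) \<and> (\<forall>e\<in>E. (\<Sum>k\<in>U. A e k * c k) = 0)"
  using assms
proof (induction E arbitrary: U A rule: finite_induct)
  case empty
  then obtain k where "k \<in> U" by fastforce
  then show ?case by (intro exI[of _ "\<lambda>_. 1"]) auto
next
  case (insert e E U A)
  have "card E < card U" using insert by simp
  show ?case
  proof (cases "\<forall>k\<in>U. A e k = 0")
    case True
    with insert.IH[OF insert.prems(1) \<open>card E < card U\<close>, of A] show ?thesis by auto
  next
    case False
    then obtain k0 where k0: "k0 \<in> U" "A e k0 \<noteq> 0" by blast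
    define U' where "U' = U - {k0}"
    have "card E < card U'" using insert k0 by (simp add: U'_def)
    \<comment> \<open>Gaussian elimination of the unknown k0 by means of equation e\<close>
    then obtain c' where c': "\<exists>k\<in>U'. c' k \<noteq> 0"
      "\<forall>e'\<in>E. (\<Sum>k\<in>U'. (A e' k - A e' k0 * A e k / A e k0) * c' k) = 0"
      using insert.IH[of U' "\<lambda>e' k. A e' k - A e' k0 * A e k / A e k0"] insert.prems(1)
      by (auto simp: U'_def)
    define c where "c = c'(k0 := - (\<Sum>k\<in>U'. A e k * c' k) / A e k0)"
    have split: "(\<Sum>k\<in>U. B k * c k) = B k0 * c k0 + (\<Sum>k\<in>U'. B k * c' k)" for B
      using k0 insert.prems(1) by (simp add: sum.remove U'_def c_def)
    have "(\<Sum>k\<in>U. A e' k * c k) = 0" if "e' \<in> insert e E" for e'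
    proof (cases "e' = e")
      case True
      then show ?thesis using k0(2) unfolding split by (simp add: c_def)
    next
      case False
      then have "(\<Sum>k\<in>U'. (A e' k - A e' k0 * A e k / A e k0) * c' k) = 0" using c'(2) that by auto
      then show ?thesis using k0(2) unfolding split
        by (simp add: c_def algebra_simps sum_subtractf sum_distrib_left sum_divide_distrib)
    qed
    moreover have "\<exists>k\<in>U. c k \<noteq> 0" using c'(1) by (auto simp: c_def U'_def)
    ultimately show ?thesis by blast
  qed
qed

lemma ratio_test:
  fixes l c :: "'k \<Rightarrow> real"
  assumes "finite U" "\<forall>p\<in>U. 0 < l p" "\<exists>p\<in>U. c p < 0"
  shows "\<exists>t\<ge>0. (\<forall>p\<in>U. 0 \<le> l p + t * c p) \<and> (\<exists>p0\<in>U. l p0 + t * c p0 = 0)"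
proof -
  define N where "N = {p\<in>U. c p < 0}"
  have "finite N" "N \<noteq> {}" using assms by (auto simp: N_def)
  define t where "t = Min ((\<lambda>p. l p / - c p) ` N)"
  have "t \<in> (\<lambda>p. l p / - c p) ` N"
    unfolding t_def using \<open>finite N\<close> \<open>N \<noteq> {}\<close> by (intro Min_in) auto
  then obtain p0 where p0: "p0 \<in> N" "t = l p0 / - c p0" by blast
  have "0 \<le> t" using p0 assms(2) by (auto simp: N_def divide_nonneg_neg less_imp_le)
  have "0 \<le> l p + t * c p" if "p \<in> U" for p
  proof (cases "c p < 0")
    case True
    then have "t \<le> l p / - c p" using \<open>finite N\<close> that by (auto simp: t_def N_def)
    then have "- (l p / c p) * c p \<le> t * c p" using True by (intro mult_right_mono_neg) auto
    with True show ?thesis by simp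
  next
    case False
    then show ?thesis using \<open>0 \<le> t\<close> assms(2) that by (simp add: add_pos_nonneg less_imp_le)
  qed
  moreover have "l p0 + t * c p0 = 0" using p0 by (auto simp: N_def)
  ultimately show ?thesis using \<open>0 \<le> t\<close> p0(1) by (auto simp: N_def)
qed

lemma conic_caratheodory:
  fixes A :: "'e \<Rightarrow> 'k \<Rightarrow> real"
  assumes "finite E" "finite K" "\<forall>k\<in>K. 0 \<le> l k"
  shows "\<exists>l'. (\<forall>k\<in>K. 0 \<le> l' k) \<and> (\<forall>e\<in>E. (\<Sum>k\<in>K. A e k * l' k) = (\<Sum>k\<in>K. A e k * l k))
    \<and> card {k\<in>K. l' k \<noteq> 0} \<le> card E"
  using assms(3)
proof (induction "card {k\<in>K. l k \<noteq> 0}" arbitrary: l rule: less_induct)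
  case less
  define U where "U = {k\<in>K. l k \<noteq> 0}"
  have "finite U" "U \<subseteq> K" using assms(2) by (auto simp: U_def)
  show ?case
  proof (cases "card U \<le> card E")
    case False
    then obtain c where c: "\<exists>k\<in>U. c k \<noteq> 0" "\<forall>e\<in>E. (\<Sum>k\<in>U. A e k * c k) = 0"
      using homogeneous_system_nontrivial_solution[OF assms(1) \<open>finite U\<close>] by force
    obtain s :: real where s: "\<exists>k\<in>U. s * c k < 0"
    proof -
      obtain k where "k \<in> U" "c k \<noteq> 0" using c(1) by blast
      then show thesis using that[of 1] that[of "-1"] by (metis linorder_neqE_linordered_idom mult_1
          mult_minus_left neg_less_0_iff_less)
    qed
    have "\<forall>k\<in>U. 0 < l k" using less.prems by (force simp: U_def)
    then obtain t p0 where t: "\<forall>k\<in>U. 0 \<le> l k + t * (s * c k)" "p0 \<in> U" "l p0 + t * (s * c p0) = 0"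
      using ratio_test[OF \<open>finite U\<close> _ s] by blast
    define l1 where "l1 k = l k + (if k \<in> U then t * (s * c k) else 0)" for k
    have "\<forall>k\<in>K. 0 \<le> l1 k" using t(1) less.prems by (auto simp: l1_def)
    have same: "(\<Sum>k\<in>K. A e k * l1 k) = (\<Sum>k\<in>K. A e k * l k)" if "e \<in> E" for e
    proof -
      have "(\<Sum>k\<in>K. A e k * l1 k)
          = (\<Sum>k\<in>K. A e k * l k) + (\<Sum>k\<in>K. if k \<in> U then t * s * (A e k * c k) else 0)"
        unfolding l1_def distrib_left sum.distrib by (intro arg_cong2[where f="(+)"] sum.cong) auto
      also have "\<dots> = (\<Sum>k\<in>K. A e k * l k) + t * s * (\<Sum>k\<in>U. A e k * c k)"
        using sum.inter_restrict[OF assms(2), of "\<lambda>k. t * s * (A e k * c k)" U] \<open>U \<subseteq> K\<close>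
        by (simp add: Int_absorb1 sum_distrib_left)
      also have "\<dots> = (\<Sum>k\<in>K. A e k * l k)" using c(2) that by simp
      finally show ?thesis .
    qed
    have "card {k\<in>K. l1 k \<noteq> 0} < card {k\<in>K. l k \<noteq> 0}"
    proof -
      have "{k\<in>K. l1 k \<noteq> 0} \<subseteq> U - {p0}" using t(3) by (auto simp: l1_def U_def)
      then have "card {k\<in>K. l1 k \<noteq> 0} \<le> card (U - {p0})" using \<open>finite U\<close> by (intro card_mono) auto
      also have "\<dots> < card U" using \<open>finite U\<close> t(2) by (rule card_Diff1_less)
      finally show ?thesis by (simp add: U_def)
    qed
    from less.hyps[OF this \<open>\<forall>k\<in>K. 0 \<le> l1 k\<close>] show ?thesis using same by auto
  qed (use less.prems in \<open>auto simp: U_def\<close>)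
qed

definition seq_inner :: "nat \<Rightarrow> (nat \<Rightarrow> 'b::real_inner) \<Rightarrow> (nat \<Rightarrow> 'b) \<Rightarrow> real" where
  "seq_inner m A B = (\<Sum>i<m. A i \<bullet> B i)"

lemma seq_inner_self_nonneg: "0 \<le> seq_inner m A A"
  unfolding seq_inner_def by (intro sum_nonneg) auto

lemma seq_inner_cong:
  "(\<And>i. i < m \<Longrightarrow> A i = A' i) \<Longrightarrow> (\<And>i. i < m \<Longrightarrow> B i = B' i) \<Longrightarrow> seq_inner m A B = seq_inner m A' B'"
  unfolding seq_inner_def by (rule sum.cong) auto

lemma seq_inner_commute: "seq_inner m A B = seq_inner m B A"
  unfolding seq_inner_def by (simp add: inner_commute)

lemma seq_inner_sum_left:
  "finite K \<Longrightarrow> seq_inner m (\<lambda>i. \<Sum>k\<in>K. c k *\<^sub>R Y k i) B = (\<Sum>k\<in>K. c k * seq_inner m (Y k) B)"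
  unfolding seq_inner_def by (simp add: inner_sum_left sum_distrib_left sum.swap[of _ K])

lemma seq_inner_linear_combination_self:
  "seq_inner m (\<lambda>i. a *\<^sub>R A i + b *\<^sub>R B i) (\<lambda>i. a *\<^sub>R A i + b *\<^sub>R B i)
     = a\<^sup>2 * seq_inner m A A + 2 * a * b * seq_inner m A B + b\<^sup>2 * seq_inner m B B"
proof -
  have "(a *\<^sub>R A i + b *\<^sub>R B i) \<bullet> (a *\<^sub>R A i + b *\<^sub>R B i)
      = a\<^sup>2 * (A i \<bullet> A i) + 2 * a * b * (A i \<bullet> B i) + b\<^sup>2 * (B i \<bullet> B i)" for i
    by (simp add: inner_commute[of "B i" "A i"] algebra_simps power2_eq_square)
  then show ?thesis unfolding seq_inner_def by (simp add: sum.distrib sum_distrib_left)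
qed

definition weighted_choice :: "nat \<Rightarrow> 'k set \<Rightarrow> ('k \<Rightarrow> nat) \<Rightarrow> ('k \<Rightarrow> real) \<Rightarrow> bool" where
  "weighted_choice r K h l \<longleftrightarrow> (\<forall>k\<in>K. h k < r) \<and> (\<forall>k\<in>K. 0 \<le> l k) \<and> sum l K = 1"

definition colorful_sum ::
    "'k set \<Rightarrow> ('k \<Rightarrow> nat \<Rightarrow> nat \<Rightarrow> 'b::real_vector) \<Rightarrow> ('k \<Rightarrow> nat) \<Rightarrow> ('k \<Rightarrow> real) \<Rightarrow> nat \<Rightarrow> 'b" where
  "colorful_sum K X h l i = (\<Sum>k\<in>K. l k *\<^sub>R X k (h k) i)"

lemma colorful_sum_cong:
  "(\<And>k. k \<in> K \<Longrightarrow> h k = h' k) \<Longrightarrow> (\<And>k. k \<in> K \<Longrightarrow> l k = l' k)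
    \<Longrightarrow> colorful_sum K X h l = colorful_sum K X h' l'"
  unfolding colorful_sum_def by (intro ext sum.cong) auto

lemma colorful_sum_linear:
  "colorful_sum K X h (\<lambda>k. a * l k + b * l' k) i = a *\<^sub>R colorful_sum K X h l i + b *\<^sub>R colorful_sum K X h l' i"
  unfolding colorful_sum_def by (simp add: scaleR_add_left sum.distrib scaleR_sum_right)

lemma colorful_sum_indicator:
  assumes "finite K" "k0 \<in> K"
  shows "colorful_sum K X h (\<lambda>k. if k = k0 then 1 else 0) i = X k0 (h k0) i"
  using assms by (simp add: colorful_sum_def if_distrib[of "\<lambda>c. c *\<^sub>R _"] cong: if_cong)

lemma exists_short_step_below_chord:
  fixes a b :: real
  assumes "0 < a" "0 \<le> b"
  shows "\<exists>t. 0 < t \<and> t \<le> 1 \<and> t\<^sup>2 * b < 2 * t * a"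
proof (intro exI conjI)
  let ?t = "a / (a + b)"
  show "0 < ?t" "?t \<le> 1" using assms by auto
  have "?t * b \<le> a" using assms by (simp add: divide_le_eq algebra_simps)
  have "?t\<^sup>2 * b = ?t * (?t * b)" by (simp add: power2_eq_square)
  also have "\<dots> \<le> ?t * a" using \<open>?t * b \<le> a\<close> \<open>0 < ?t\<close> by (intro mult_left_mono) auto
  also have "\<dots> < 2 * ?t * a" using mult_pos_pos[OF \<open>0 < ?t\<close> assms(1)] by linarith
  finally show "?t\<^sup>2 * b < 2 * ?t * a" .
qed

context
  fixes K :: "'k set" and X :: "'k \<Rightarrow> nat \<Rightarrow> nat \<Rightarrow> 'b::euclidean_space" and m r :: nat
  assumes finite_K: "finite K" and r_pos: "0 < r"
    and card_K: "(m - 1) * DIM('b) < card K"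
    and X_in_hyperplane: "\<And>k j. k \<in> K \<Longrightarrow> j < r \<Longrightarrow> (\<Sum>i<m. X k j i) = 0"
    and X_centred: "\<And>k i. k \<in> K \<Longrightarrow> i < m \<Longrightarrow> (\<Sum>j<r. X k j i) = 0"
begin

abbreviation colorful_cost :: "('k \<Rightarrow> nat) \<Rightarrow> ('k \<Rightarrow> real) \<Rightarrow> real" where
  "colorful_cost h l \<equiv> seq_inner m (colorful_sum K X h l) (colorful_sum K X h l)"

abbreviation colorful_minimizer :: "('k \<Rightarrow> nat) \<Rightarrow> ('k \<Rightarrow> real) \<Rightarrow> bool" where
  "colorful_minimizer h l \<equiv> weighted_choice r K h l
     \<and> (\<forall>h' l'. weighted_choice r K h' l' \<longrightarrow> colorful_cost h l \<le> colorful_cost h' l')"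

lemma colorful_cost_continuous:
  "continuous_map (product_topology (\<lambda>_. euclideanreal) K) euclideanreal (colorful_cost h)"
proof -
  have "colorful_cost h l
      = (\<Sum>i<m. \<Sum>k\<in>K. \<Sum>k'\<in>K. l k * l k' * (X k' (h k') i \<bullet> X k (h k) i))" for l
    unfolding seq_inner_def colorful_sum_def
    by (simp add: inner_sum_left inner_sum_right sum_distrib_left mult.assoc)
  then show ?thesis
    by (simp only:) (intro continuous_map_sum continuous_map_real_mult
        continuous_map_product_projection continuous_map_const[THEN iffD2] finite_K finite_lessThan; simp)
qed

lemma colorful_minimizer_for_fixed_colors:
  assumes "\<forall>k\<in>K. h k < r"
  shows "\<exists>l. weighted_choice r K h l \<and> (\<forall>l'. weighted_choice r K h l' \<longrightarrow> colorful_cost h l \<le> colorful_cost h l')"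
proof -
  define D where "D = {l \<in> PiE K (\<lambda>_. {0..1::real}). sum l K \<in> {1}}"
  have "compactin (product_topology (\<lambda>_. euclideanreal) K) D"
  proof (rule closed_compactin)
    show "compactin (product_topology (\<lambda>_. euclideanreal) K) (PiE K (\<lambda>_. {0..1::real}))"
      by (simp add: compactin_PiE)
    show "closedin (product_topology (\<lambda>_. euclideanreal) K) D"
      unfolding D_def
      by (rule closedin_continuous_map_preimage_gen)
        (auto simp: closedin_product_topology intro: continuous_map_sum
          continuous_map_product_projection finite_K)
  qed (auto simp: D_def)
  then have "compact (colorful_cost h ` D)"
    using image_compactin[OF _ colorful_cost_continuous] by simp
  moreover obtain k1 where "k1 \<in> K" using card_K by fastforce
  then have "restrict (\<lambda>k. if k = k1 then 1 else 0) K \<in> D"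
    using finite_K by (auto simp: D_def restrict_def)
  ultimately obtain l where l: "l \<in> D" "\<forall>l'\<in>D. colorful_cost h l \<le> colorful_cost h l'"
    using compact_attains_inf[of "colorful_cost h ` D"] by blast
  have "colorful_cost h l \<le> colorful_cost h l'" if "weighted_choice r K h l'" for l'
  proof -
    have "l' k \<le> 1" if "k \<in> K" for k
      using \<open>weighted_choice r K h l'\<close> that finite_K member_le_sum[of k K l']
      by (auto simp: weighted_choice_def)
    then have "restrict l' K \<in> D" using that by (auto simp: D_def weighted_choice_def)
    moreover have "colorful_cost h l' = colorful_cost h (restrict l' K)"
      by (simp add: colorful_sum_cong[of K h h l' "restrict l' K" X])
    ultimately show ?thesis using l(2) by simp
  qed
  moreover have "weighted_choice r K h l" using l(1) assms by (auto simp: weighted_choice_def D_def PiE_iff)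
  ultimately show ?thesis by blast
qed

lemma colorful_minimizer_exists: "\<exists>h l. colorful_minimizer h l"
proof -
  define H where "H = PiE K (\<lambda>_. {..<r})"
  have "\<forall>h\<in>H. \<exists>l. weighted_choice r K h l
      \<and> (\<forall>l'. weighted_choice r K h l' \<longrightarrow> colorful_cost h l \<le> colorful_cost h l')"
    using colorful_minimizer_for_fixed_colors by (auto simp: H_def)
  then have "\<exists>L. \<forall>h\<in>H. weighted_choice r K h (L h)
      \<and> (\<forall>l'. weighted_choice r K h l' \<longrightarrow> colorful_cost h (L h) \<le> colorful_cost h l')"
    by (rule bchoice)
  then obtain L where L: "\<forall>h\<in>H. weighted_choice r K h (L h)
      \<and> (\<forall>l'. weighted_choice r K h l' \<longrightarrow> colorful_cost h (L h) \<le> colorful_cost h l')" ..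
  have "finite H" using finite_K by (simp add: H_def finite_PiE)
  moreover have "restrict (\<lambda>_. 0) K \<in> H" using r_pos by (simp add: H_def)
  ultimately have "Min ((\<lambda>h. colorful_cost h (L h)) ` H) \<in> (\<lambda>h. colorful_cost h (L h)) ` H"
    by (intro Min_in) auto
  then obtain h0 where "h0 \<in> H" "colorful_cost h0 (L h0) = Min ((\<lambda>h. colorful_cost h (L h)) ` H)"
    by auto
  then have h0: "h0 \<in> H" "\<And>h. h \<in> H \<Longrightarrow> colorful_cost h0 (L h0) \<le> colorful_cost h (L h)"
    using \<open>finite H\<close> by auto
  have "colorful_cost h0 (L h0) \<le> colorful_cost h' l'" if "weighted_choice r K h' l'" for h' l'
  proof -
    have "restrict h' K \<in> H" "weighted_choice r K (restrict h' K) l'"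
      using that by (auto simp: H_def weighted_choice_def)
    have "colorful_cost h0 (L h0) \<le> colorful_cost (restrict h' K) (L (restrict h' K))"
      using h0(2) \<open>restrict h' K \<in> H\<close> by blast
    also have "\<dots> \<le> colorful_cost (restrict h' K) l'"
      using L \<open>restrict h' K \<in> H\<close> \<open>weighted_choice r K (restrict h' K) l'\<close> by blast
    also have "\<dots> = colorful_cost h' l'"
      by (simp add: colorful_sum_cong[of K "restrict h' K" h' l' l'])
    finally show ?thesis .
  qed
  then show ?thesis using L h0(1) by blast
qed

lemma colorful_minimizer_first_order:
  assumes "colorful_minimizer h l" "k0 \<in> K"
  shows "colorful_cost h l \<le> seq_inner m (X k0 (h k0)) (colorful_sum K X h l)"
proof (rule ccontr)
  define Z where "Z = colorful_sum K X h l"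
  define Y where "Y = X k0 (h k0)"
  assume "\<not> ?thesis"
  then have "0 < seq_inner m Z Z - seq_inner m Y Z" by (simp add: Z_def Y_def)
  moreover have "0 \<le> seq_inner m Y Y - 2 * seq_inner m Y Z + seq_inner m Z Z"
    using seq_inner_self_nonneg[of m "\<lambda>i. 1 *\<^sub>R Y i + (-1) *\<^sub>R Z i"]
    by (simp only: seq_inner_linear_combination_self) simp
  ultimately obtain t where t: "0 < t" "t \<le> 1"
    "t\<^sup>2 * (seq_inner m Y Y - 2 * seq_inner m Y Z + seq_inner m Z Z)
       < 2 * t * (seq_inner m Z Z - seq_inner m Y Z)"
    using exists_short_step_below_chord by blast
  define l' where "l' k = (1 - t) * l k + t * (if k = k0 then 1 else 0)" for k
  have "weighted_choice r K h l'"
    using assms t finite_K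
    by (auto simp: weighted_choice_def l'_def sum.distrib sum_distrib_left[symmetric])
  then have "colorful_cost h l \<le> colorful_cost h l'" using assms(1) by blast
  moreover have "colorful_sum K X h l' = (\<lambda>i. (1 - t) *\<^sub>R Z i + t *\<^sub>R Y i)"
    unfolding l'_def colorful_sum_linear colorful_sum_indicator[OF finite_K assms(2)] Z_def Y_def ..
  then have "colorful_cost h l' = (1 - t)\<^sup>2 * seq_inner m Z Z + 2 * (1 - t) * t * seq_inner m Z Y
      + t\<^sup>2 * seq_inner m Y Y"
    by (simp only: seq_inner_linear_combination_self)
  ultimately show False
    using t(3) seq_inner_commute[of m Z Y] by (simp add: Z_def algebra_simps power2_eq_square)
qed

lemma colorful_sum_in_hyperplane:
  assumes "\<forall>k\<in>K. h k < r"
  shows "(\<Sum>i<m. colorful_sum K X h l i) = 0"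
proof -
  have "(\<Sum>i<m. colorful_sum K X h l i) = (\<Sum>k\<in>K. l k *\<^sub>R (\<Sum>i<m. X k (h k) i))"
    unfolding colorful_sum_def scaleR_sum_right by (rule sum.swap)
  then show ?thesis using assms X_in_hyperplane by simp
qed

lemma colorful_sum_eq_if_eq_below_last:
  assumes "\<forall>k\<in>K. h k < r" "\<forall>i<m - 1. colorful_sum K X h l' i = colorful_sum K X h l i"
  shows "\<forall>i<m. colorful_sum K X h l' i = colorful_sum K X h l i"
proof (intro allI impI)
  fix i assume "i < m"
  show "colorful_sum K X h l' i = colorful_sum K X h l i"
  proof (cases "i < m - 1")
    case False
    then have "m = Suc i" using \<open>i < m\<close> by simp
    have "(\<Sum>i<m. colorful_sum K X h l' i) = (\<Sum>i<m. colorful_sum K X h l i)"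
      using colorful_sum_in_hyperplane[OF assms(1)] by simp
    then show ?thesis using assms(2) \<open>m = Suc i\<close> by simp
  qed (use assms(2) in simp)
qed

lemma colorful_minimizer_equal_products:
  assumes "colorful_minimizer h l" "\<forall>k\<in>K. 0 < l k"
  shows "\<forall>k\<in>K. seq_inner m (X k (h k)) (colorful_sum K X h l) = colorful_cost h l"
proof -
  define Z where "Z = colorful_sum K X h l"
  have "seq_inner m Z Z = seq_inner m (\<lambda>i. \<Sum>k\<in>K. l k *\<^sub>R X k (h k) i) Z"
    by (simp add: Z_def colorful_sum_def[abs_def])
  then have ZZ: "seq_inner m Z Z = (\<Sum>k\<in>K. l k * seq_inner m (X k (h k)) Z)"
    by (simp only: seq_inner_sum_left[OF finite_K])
  let ?excess = "\<lambda>k. l k * (seq_inner m (X k (h k)) Z - seq_inner m Z Z)"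
  have "\<forall>k\<in>K. 0 \<le> ?excess k"
    using colorful_minimizer_first_order[OF assms(1)] assms(2) by (simp add: Z_def less_imp_le)
  moreover have "sum l K = 1" using assms(1) by (simp add: weighted_choice_def)
  then have "sum ?excess K = 0"
    by (simp add: right_diff_distrib sum_subtractf ZZ[symmetric] sum_distrib_right[symmetric])
  ultimately have "\<forall>k\<in>K. ?excess k = 0" using sum_nonneg_eq_0_iff[OF finite_K, of ?excess] by blast
  then show ?thesis using assms(2) by (force simp: Z_def)
qed

text \<open>All colours in use have the same product with Z, and the colorful sums live in a space of
  dimension (m - 1) DIM('b) < |K|, so conic Caratheodory frees a colour without moving Z.\<close>
lemma colorful_minimizer_drop_color:
  assumes "colorful_minimizer h l" "0 < colorful_cost h l"
  shows "\<exists>l'. weighted_choice r K h l' \<and> (\<forall>i<m. colorful_sum K X h l' i = colorful_sum K X h l i)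
    \<and> (\<exists>k0\<in>K. l' k0 = 0)"
proof (cases "\<exists>k0\<in>K. l k0 = 0")
  case False
  define Z where "Z = colorful_sum K X h l"
  have l_pos: "\<forall>k\<in>K. 0 < l k" using False assms(1) by (force simp: weighted_choice_def)
  define E where "E = {..<m - 1} \<times> (Basis :: 'b set)"
  define A where "A e k = X k (h k) (fst e) \<bullet> snd e" for e k
  obtain l' where l': "\<forall>k\<in>K. 0 \<le> l' k" "\<forall>e\<in>E. (\<Sum>k\<in>K. A e k * l' k) = (\<Sum>k\<in>K. A e k * l k)"
    "card {k\<in>K. l' k \<noteq> 0} \<le> card E"
    using conic_caratheodory[of E K l A] finite_K l_pos by (force simp: E_def)
  have "card {k\<in>K. l' k \<noteq> 0} < card K" using l'(3) card_K by (simp add: E_def card_cartesian_product)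
  then obtain k0 where "k0 \<in> K" "l' k0 = 0"
    by (metis (mono_tags, lifting) Collect_cong Collect_mem_eq less_irrefl)
  have "\<forall>i<m - 1. colorful_sum K X h l' i = Z i"
  proof (intro allI impI)
    fix i assume "i < m - 1"
    show "colorful_sum K X h l' i = Z i"
    proof (rule euclidean_eqI)
      fix b :: 'b assume "b \<in> Basis"
      then have "(i, b) \<in> E" using \<open>i < m - 1\<close> by (simp add: E_def)
      from bspec[OF l'(2) this] show "colorful_sum K X h l' i \<bullet> b = Z i \<bullet> b"
        by (simp add: A_def Z_def colorful_sum_def inner_sum_left mult.commute)
    qed
  qed
  moreover have "\<forall>k\<in>K. h k < r" using assms(1) by (simp add: weighted_choice_def)
  ultimately have same_sum: "\<forall>i<m. colorful_sum K X h l' i = Z i"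
    unfolding Z_def by (intro colorful_sum_eq_if_eq_below_last)
  have "seq_inner m Z Z = seq_inner m (colorful_sum K X h l') Z"
    using same_sum by (intro seq_inner_cong) auto
  also have "\<dots> = sum l' K * seq_inner m Z Z"
    unfolding colorful_sum_def seq_inner_sum_left[OF finite_K]
    using colorful_minimizer_equal_products[OF assms(1) l_pos]
    by (simp add: Z_def sum_distrib_right)
  finally have "sum l' K = 1" using assms(2) by (simp add: Z_def)
  then have "weighted_choice r K h l'" using assms(1) l'(1) by (simp add: weighted_choice_def)
  then show ?thesis using same_sum \<open>k0 \<in> K\<close> \<open>l' k0 = 0\<close> by (auto simp: Z_def)
qed (use assms in blast)

lemma colorful_minimizer_cost_zero:
  assumes "colorful_minimizer h l"
  shows "colorful_cost h l = 0"
proof (rule ccontr)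
  assume "colorful_cost h l \<noteq> 0"
  then have "0 < colorful_cost h l" using seq_inner_self_nonneg by (simp add: order_less_le)
  then obtain l' k0 where l': "weighted_choice r K h l'"
    "\<forall>i<m. colorful_sum K X h l' i = colorful_sum K X h l i" and "k0 \<in> K" "l' k0 = 0"
    using colorful_minimizer_drop_color[OF assms] by blast
  define Z where "Z = colorful_sum K X h l"
  \<comment> \<open>k0 has weight zero, so it can be recoloured with a colour j on the far side of Z\<close>
  have "\<exists>j<r. seq_inner m (X k0 j) Z \<le> 0"
  proof (rule ccontr)
    assume "\<not> ?thesis"
    then have "0 < (\<Sum>j<r. seq_inner m (X k0 j) Z)" using r_pos by (intro sum_pos) auto
    also have "(\<Sum>j<r. seq_inner m (X k0 j) Z) = seq_inner m (\<lambda>i. \<Sum>j<r. 1 *\<^sub>R X k0 j i) Z"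
      using seq_inner_sum_left[of "{..<r}" m "\<lambda>_. 1" "X k0" Z] by simp
    also have "\<dots> = 0" using X_centred \<open>k0 \<in> K\<close> by (simp add: seq_inner_def)
    finally show False by simp
  qed
  then obtain j where "j < r" "seq_inner m (X k0 j) Z \<le> 0" by blast
  define h' where "h' = h(k0 := j)"
  have same: "colorful_sum K X h' l' = colorful_sum K X h l'"
    unfolding colorful_sum_def h'_def using \<open>l' k0 = 0\<close> by (intro ext sum.cong) auto
  have "colorful_cost h' l' = colorful_cost h l"
    unfolding same using l'(2) by (intro seq_inner_cong) auto
  moreover have "weighted_choice r K h' l'" using l'(1) \<open>j < r\<close> by (simp add: weighted_choice_def h'_def)
  ultimately have "colorful_minimizer h' l'" using assms by simp
  from colorful_minimizer_first_order[OF this \<open>k0 \<in> K\<close>]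
  have "colorful_cost h l \<le> seq_inner m (X k0 j) Z"
    unfolding \<open>colorful_cost h' l' = colorful_cost h l\<close> same
    using l'(2) by (simp add: h'_def Z_def seq_inner_cong[of m _ _ "colorful_sum K X h l'"])
  then show False using \<open>0 < colorful_cost h l\<close> \<open>seq_inner m (X k0 j) Z \<le> 0\<close> by simp
qed

text \<open>Barany's colorful Caratheodory theorem, for the colour classes {X k j | j < r} in the
  (m - 1) DIM('b)-dimensional space of zero-sum sequences of length m in 'b.\<close>
theorem colorful_caratheodory:
  "\<exists>h l. weighted_choice r K h l \<and> (\<forall>i<m. colorful_sum K X h l i = 0)"
proof -
  obtain h l where "colorful_minimizer h l" using colorful_minimizer_exists by blast
  then have "(\<Sum>i<m. colorful_sum K X h l i \<bullet> colorful_sum K X h l i) = 0"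
    using colorful_minimizer_cost_zero by (simp add: seq_inner_def)
  then have "\<forall>i<m. colorful_sum K X h l i = 0" by (simp add: sum_nonneg_eq_0_iff)
  then show ?thesis using \<open>colorful_minimizer h l\<close> by blast
qed

end

definition label_blocks :: "'a set \<Rightarrow> nat \<Rightarrow> ('a \<Rightarrow> nat) \<Rightarrow> 'a set set" where
  "label_blocks S r f = (\<lambda>j. {p\<in>S. f p = j}) ` {..<r}"

text \<open>A labelling f of S encodes the partition label_blocks S r f. If C is a core, f stays a
  Tverberg labelling however the points outside C are relabelled.\<close>
definition tverberg_core :: "'a::real_vector set \<Rightarrow> nat \<Rightarrow> ('a \<Rightarrow> nat) \<Rightarrow> 'a set \<Rightarrow> bool" where
  "tverberg_core S r f C \<longleftrightarrow>
     C \<subseteq> S \<and> (\<forall>p\<in>S. f p < r) \<and> (\<exists>x. \<forall>j<r. x \<in> convex hull {p\<in>C. f p = j})"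

lemma label_blocks_cong: "(\<And>p. p \<in> S \<Longrightarrow> f p = g p) \<Longrightarrow> label_blocks S r f = label_blocks S r g"
  unfolding label_blocks_def by (intro image_cong) auto

lemma restrict_label_blocks:
  "restrict_partition (label_blocks S r f) T = (\<lambda>j. {p\<in>S. f p = j} \<inter> T) ` {..<r} - {{}}"
  unfolding restrict_partition_def label_blocks_def by (simp add: image_image)

lemma tverberg_core_relabel:
  assumes "tverberg_core S r f C" "\<forall>p\<in>S. g p < r" "\<forall>p\<in>C. g p = f p"
  shows "tverberg_core S r g C"
proof -
  have "{p\<in>C. g p = j} = {p\<in>C. f p = j}" for j using assms(3) by auto
  then show ?thesis using assms(1,2) by (simp add: tverberg_core_def)
qed

lemma tverberg_core_block_nonempty:
  assumes "tverberg_core S r f C" "j < r"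
  shows "{p\<in>S. f p = j} \<noteq> {}"
proof -
  obtain x where "x \<in> convex hull {p\<in>C. f p = j}" "C \<subseteq> S"
    using assms by (auto simp: tverberg_core_def)
  then have "{p\<in>C. f p = j} \<noteq> {}" by (metis convex_hull_empty empty_iff)
  with \<open>C \<subseteq> S\<close> show ?thesis by blast
qed

lemma restrict_label_blocks_self:
  assumes "tverberg_core S r f C"
  shows "restrict_partition (label_blocks S r f) S = label_blocks S r f"
proof -
  have "{} \<notin> label_blocks S r f"
    using tverberg_core_block_nonempty[OF assms] by (auto simp: label_blocks_def)
  moreover have "{p\<in>S. f p = j} \<inter> S = {p\<in>S. f p = j}" for j by auto
  ultimately show ?thesis unfolding restrict_label_blocks by (simp add: label_blocks_def)
qed

lemma tverberg_partition_label_blocks: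
  assumes "tverberg_core S r f C"
  shows "tverberg_partition S r (label_blocks S r f)"
proof -
  have nonempty: "{p\<in>S. f p = j} \<noteq> {}" if "j < r" for j
    using tverberg_core_block_nonempty[OF assms that] .
  then have "inj_on (\<lambda>j. {p\<in>S. f p = j}) {..<r}" by (auto intro!: inj_onI)
  then have "is_partition S r (label_blocks S r f)"
    using nonempty assms by (auto simp: is_partition_def label_blocks_def card_image tverberg_core_def)
  moreover obtain x where "\<forall>j<r. x \<in> convex hull {p\<in>C. f p = j}" "C \<subseteq> S"
    using assms by (auto simp: tverberg_core_def)
  then have "x \<in> (\<Inter>B\<in>label_blocks S r f. convex hull B)"
    by (auto simp: label_blocks_def intro: hull_mono[THEN subsetD, rotated])
  ultimately show ?thesis unfolding tverberg_partition_def by blast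
qed

lemma tverberg_partition_imp_labelling:
  assumes "tverberg_partition S r P"
  shows "\<exists>f. tverberg_core S r f S \<and> label_blocks S r f = P"
proof -
  have disjoint: "\<And>B C. B \<in> P \<Longrightarrow> C \<in> P \<Longrightarrow> B \<noteq> C \<Longrightarrow> B \<inter> C = {}"
    and "\<Union>P = S" "finite P" "card P = r" "(\<Inter>B\<in>P. convex hull B) \<noteq> {}"
    using assms by (auto simp: tverberg_partition_def is_partition_def)
  obtain g where g: "bij_betw g {..<r} P"
    using ex_bij_betw_nat_finite[OF \<open>finite P\<close>] \<open>card P = r\<close> by (auto simp: atLeast0LessThan)
  then have g_into: "g j \<in> P" if "j < r" for j using that by (auto dest: bij_betw_apply)
  have g_onto: "P = g ` {..<r}" using g by (simp add: bij_betw_def)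
  have unique: "i = j" if "i < r" "j < r" "p \<in> g i" "p \<in> g j" for i j p
  proof -
    have "g i = g j" using disjoint[OF g_into g_into] that by blast
    then show ?thesis using bij_betw_imp_inj_on[OF g] that(1,2) by (auto dest: inj_onD)
  qed
  have "\<exists>j<r. p \<in> g j" if "p \<in> S" for p
    using that \<open>\<Union>P = S\<close> g_onto by auto
  then obtain f where f: "\<And>p. p \<in> S \<Longrightarrow> f p < r \<and> p \<in> g (f p)" by metis
  have blocks: "{p\<in>S. f p = j} = g j" if "j < r" for j
    using f unique[OF _ that] g_into[OF that] \<open>\<Union>P = S\<close> by blast
  then have "label_blocks S r f = P" by (simp add: label_blocks_def g_onto)
  moreover obtain x where "\<forall>B\<in>P. x \<in> convex hull B"
    using \<open>(\<Inter>B\<in>P. convex hull B) \<noteq> {}\<close> by blast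
  then have "\<forall>j<r. x \<in> convex hull {p\<in>S. f p = j}" using blocks g_into by auto
  then have "tverberg_core S r f S" using f by (auto simp: tverberg_core_def)
  ultimately show ?thesis by blast
qed

lemma label_blocks_fun_upd_neq:
  assumes "p \<in> S" "f p < r" "f p \<noteq> j" "\<exists>q\<in>S. f q = j"
  shows "label_blocks S r f \<noteq> label_blocks S r (f(p := j))"
proof
  assume same: "label_blocks S r f = label_blocks S r (f(p := j))"
  have "{q\<in>S. f q = f p} \<in> label_blocks S r f"
    unfolding label_blocks_def using assms(2) by (intro image_eqI[where x = "f p"]) auto
  then have "{q\<in>S. f q = f p} \<in> label_blocks S r (f(p := j))" by (simp only: same)
  then obtain i where old_block: "{q\<in>S. f q = f p} = {q\<in>S. (f(p := j)) q = i}"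
    unfolding label_blocks_def by (rule imageE)
  \<comment> \<open>the old block of p would be its new block, which also contains the old block of j\<close>
  have "p \<in> {q\<in>S. f q = f p}" using assms(1) by simp
  then have "p \<in> {q\<in>S. (f(p := j)) q = i}" by (simp only: old_block)
  then have "i = j" by simp
  obtain q where "q \<in> S" "f q = j" using assms(4) by blast
  then have "q \<noteq> p" using assms(3) by auto
  then have "q \<in> {q\<in>S. (f(p := j)) q = i}" using \<open>q \<in> S\<close> \<open>f q = j\<close> \<open>i = j\<close> by simp
  then have "f q = f p" using old_block by blast
  then show False using \<open>f q = j\<close> assms(3) by simp
qed

lemma partition_distance_eq_one:
  assumes "finite S" "p \<in> S" "P \<noteq> Q" "restrict_partition P S = P" "restrict_partition Q S = Q"
    and "restrict_partition P (S - {p}) = restrict_partition Q (S - {p})"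
  shows "partition_distance S P Q = 1"
  unfolding partition_distance_def
proof (rule Least_equality)
  show "\<exists>X\<subseteq>S. card X = 1 \<and> restrict_partition P (S - X) = restrict_partition Q (S - X)"
    using assms(2,6) by (intro exI[of _ "{p}"]) auto
next
  fix k assume "\<exists>X\<subseteq>S. card X = k \<and> restrict_partition P (S - X) = restrict_partition Q (S - X)"
  then obtain X where "X \<subseteq> S" "card X = k" "restrict_partition P (S - X) = restrict_partition Q (S - X)"
    by blast
  moreover have "X = {}" if "k = 0"
    using that \<open>card X = k\<close> finite_subset[OF \<open>X \<subseteq> S\<close> assms(1)] by simp
  ultimately show "1 \<le> k" using assms(3-5) by (cases "k = 0") auto
qed

lemma tverberg_edge_relabel_point:
  assumes "finite S" "tverberg_core S r f C" "tverberg_core S r g C'"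
    and "p \<in> S" "g = f(p := j)" "f p \<noteq> j"
  shows "(label_blocks S r f, label_blocks S r g) \<in> tverberg_graph_edges S r"
proof -
  have "restrict_partition (label_blocks S r f) (S - {p})
      = restrict_partition (label_blocks S r g) (S - {p})"
    unfolding restrict_label_blocks using assms(5) by (intro arg_cong2[where f="(-)"] image_cong) auto
  moreover have "label_blocks S r f \<noteq> label_blocks S r g"
  proof -
    have "f p < r" "j < r" using assms(2-5) by (force simp: tverberg_core_def)+
    have "\<exists>q\<in>S. f q = j" using tverberg_core_block_nonempty[OF assms(2) \<open>j < r\<close>] by blast
    then show ?thesis
      unfolding assms(5) by (rule label_blocks_fun_upd_neq[of p S f r j, OF assms(4) \<open>f p < r\<close> assms(6)])
  qed
  ultimately have "partition_distance S (label_blocks S r f) (label_blocks S r g) = 1"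
    using partition_distance_eq_one[OF assms(1,4)]
      restrict_label_blocks_self[OF assms(2)] restrict_label_blocks_self[OF assms(3)] by blast
  then show ?thesis
    using tverberg_partition_label_blocks assms(2,3) by (auto simp: tverberg_graph_edges_def)
qed

lemma tverberg_path_relabel_outside_core:
  assumes "finite S" "tverberg_core S r f C" "\<forall>p\<in>S. g p < r" "\<forall>p\<in>C. g p = f p"
  shows "(label_blocks S r f, label_blocks S r g) \<in> (tverberg_graph_edges S r)\<^sup>*"
  using assms(2,4)
proof (induction "card {p\<in>S. f p \<noteq> g p}" arbitrary: f rule: less_induct)
  case less
  show ?case
  proof (cases "\<exists>p\<in>S. f p \<noteq> g p")
    case True
    then obtain p where p: "p \<in> S" "f p \<noteq> g p" by blast
    define f1 where "f1 = f(p := g p)"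
    have "p \<notin> C" using p less.prems(2) by auto
    have "\<forall>q\<in>S. f1 q < r" using assms(3) less.prems(1) by (auto simp: f1_def tverberg_core_def)
    moreover have "\<forall>q\<in>C. f1 q = f q" using \<open>p \<notin> C\<close> by (simp add: f1_def)
    ultimately have core1: "tverberg_core S r f1 C" by (rule tverberg_core_relabel[OF less.prems(1)])
    have "{q\<in>S. f1 q \<noteq> g q} \<subset> {q\<in>S. f q \<noteq> g q}" using p by (auto simp: f1_def)
    then have fewer: "card {q\<in>S. f1 q \<noteq> g q} < card {q\<in>S. f q \<noteq> g q}"
      using assms(1) by (intro psubset_card_mono) auto
    have "\<forall>q\<in>C. g q = f1 q" using less.prems(2) \<open>p \<notin> C\<close> by (simp add: f1_def)
    note path = less.hyps[OF fewer core1 this]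
    have "(label_blocks S r f, label_blocks S r f1) \<in> tverberg_graph_edges S r"
      using tverberg_edge_relabel_point[OF assms(1) less.prems(1) core1 p(1) f1_def p(2)] .
    then show ?thesis using path by (rule converse_rtrancl_into_rtrancl)
  next
    case False
    then have "label_blocks S r f = label_blocks S r g" by (intro label_blocks_cong) auto
    then show ?thesis by simp
  qed
qed

lemma sum_scaleR_in_convex_hull_support:
  fixes B :: "'a::real_vector set"
  assumes "finite B" "\<forall>p\<in>B. 0 \<le> w p" "sum w B = 1"
  shows "(\<Sum>p\<in>B. w p *\<^sub>R p) \<in> convex hull {p\<in>B. w p \<noteq> 0}"
proof -
  let ?D = "{p\<in>B. w p \<noteq> 0}"
  have "(\<Sum>p\<in>B. w p *\<^sub>R p) = (\<Sum>p\<in>?D. w p *\<^sub>R p)"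
    using assms(1) by (intro sum.mono_neutral_right) auto
  moreover have "sum w ?D = sum w B"
    using assms(1) by (intro sum.mono_neutral_left) auto
  then have "(\<Sum>p\<in>?D. w p *\<^sub>R p) \<in> convex hull ?D"
    using assms by (intro convex_sum convex_convex_hull hull_inc) auto
  ultimately show ?thesis by (simp only:)
qed

lemma common_point_block_weights:
  assumes "finite C" "\<forall>j<r. x \<in> convex hull {p\<in>C. f p = j}"
  shows "\<exists>l. (\<forall>p\<in>C. 0 \<le> l p)
    \<and> (\<forall>j<r. sum l {p\<in>C. f p = j} = 1 \<and> (\<Sum>p\<in>{p\<in>C. f p = j}. l p *\<^sub>R p) = x)"
proof -
  let ?block = "\<lambda>j. {p\<in>C. f p = j}"
  have "\<forall>j\<in>{..<r}. \<exists>u. (\<forall>p\<in>?block j. 0 \<le> u p) \<and> sum u (?block j) = 1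
      \<and> (\<Sum>p\<in>?block j. u p *\<^sub>R p) = x"
    using assms by (auto simp: convex_hull_finite)
  then have "\<exists>u. \<forall>j\<in>{..<r}. (\<forall>p\<in>?block j. 0 \<le> u j p) \<and> sum (u j) (?block j) = 1
      \<and> (\<Sum>p\<in>?block j. u j p *\<^sub>R p) = x"
    by (rule bchoice)
  then obtain u where u: "\<forall>j\<in>{..<r}. (\<forall>p\<in>?block j. 0 \<le> u j p) \<and> sum (u j) (?block j) = 1
      \<and> (\<Sum>p\<in>?block j. u j p *\<^sub>R p) = x" ..
  define l where "l p = (if f p < r then u (f p) p else 0)" for p
  have "sum l (?block j) = 1 \<and> (\<Sum>p\<in>?block j. l p *\<^sub>R p) = x" if "j < r" for j
  proof -
    have "sum l (?block j) = sum (u j) (?block j)"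
      "(\<Sum>p\<in>?block j. l p *\<^sub>R p) = (\<Sum>p\<in>?block j. u j p *\<^sub>R p)"
      using that by (auto simp: l_def intro!: sum.cong)
    then show ?thesis using u that by simp
  qed
  moreover have "\<forall>p\<in>C. 0 \<le> l p" using u by (force simp: l_def)
  ultimately show ?thesis by blast
qed

lemma tverberg_core_of_block_weights:
  assumes "C \<subseteq> S" "finite C" "\<forall>p\<in>S. f p < r" "\<forall>p\<in>C. 0 \<le> l p"
    and "\<forall>j<r. sum l {p\<in>C. f p = j} = 1"
    and "\<forall>j<r. (\<Sum>p\<in>{p\<in>C. f p = j}. l p *\<^sub>R p) = (\<Sum>p\<in>{p\<in>C. f p = 0}. l p *\<^sub>R p)"
  shows "tverberg_core S r f {p\<in>C. l p \<noteq> 0}"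
proof -
  have "(\<Sum>p\<in>{p\<in>C. f p = 0}. l p *\<^sub>R p) \<in> convex hull {p\<in>{p\<in>C. l p \<noteq> 0}. f p = j}"
    if "j < r" for j
  proof -
    have "(\<Sum>p\<in>{p\<in>C. f p = j}. l p *\<^sub>R p) \<in> convex hull {p\<in>{p\<in>C. f p = j}. l p \<noteq> 0}"
      using assms(2,4) assms(5)[rule_format, OF that] by (intro sum_scaleR_in_convex_hull_support) auto
    moreover have "{p\<in>{p\<in>C. f p = j}. l p \<noteq> 0} = {p\<in>{p\<in>C. l p \<noteq> 0}. f p = j}" by auto
    moreover have "(\<Sum>p\<in>{p\<in>C. f p = j}. l p *\<^sub>R p) = (\<Sum>p\<in>{p\<in>C. f p = 0}. l p *\<^sub>R p)"
      using assms(6) that by blast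
    ultimately show ?thesis by simp
  qed
  then show ?thesis using assms(1,3) by (auto simp: tverberg_core_def)
qed

text \<open>Coefficients of the Tv(d, r) equations on block weights: Inl j gives the total weight of
  block j, Inr (j, b) the b-coordinate of the weighted sum of block j minus that of block 0.\<close>
definition tverberg_equation :: "('a::euclidean_space \<Rightarrow> nat) \<Rightarrow> nat + nat \<times> 'a \<Rightarrow> 'a \<Rightarrow> real" where
  "tverberg_equation f e p = (case e of Inl j \<Rightarrow> if f p = j then 1 else 0
     | Inr (j, b) \<Rightarrow> (if f p = j then p \<bullet> b else 0) - (if f p = 0 then p \<bullet> b else 0))"

lemma sum_tverberg_equation_Inl:
  assumes "finite C"
  shows "(\<Sum>p\<in>C. tverberg_equation f (Inl j) p * v p) = sum v {p\<in>C. f p = j}"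
proof -
  have "(\<Sum>p\<in>C. tverberg_equation f (Inl j) p * v p) = (\<Sum>p\<in>C. if f p = j then v p else 0)"
    by (intro sum.cong) (auto simp: tverberg_equation_def)
  then show ?thesis using assms by (simp add: sum.inter_filter)
qed

lemma sum_tverberg_equation_Inr:
  assumes "finite C"
  shows "(\<Sum>p\<in>C. tverberg_equation f (Inr (j, b)) p * v p)
    = (\<Sum>p\<in>{p\<in>C. f p = j}. v p *\<^sub>R p) \<bullet> b - (\<Sum>p\<in>{p\<in>C. f p = 0}. v p *\<^sub>R p) \<bullet> b"
proof -
  have "(\<Sum>p\<in>C. tverberg_equation f (Inr (j, b)) p * v p)
      = (\<Sum>p\<in>C. if f p = j then v p * (p \<bullet> b) else 0) - (\<Sum>p\<in>C. if f p = 0 then v p * (p \<bullet> b) else 0)"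
    unfolding sum_subtractf[symmetric] by (intro sum.cong) (auto simp: tverberg_equation_def)
  moreover have "(\<Sum>p\<in>{p\<in>C. f p = i}. v p *\<^sub>R p) \<bullet> b = (\<Sum>p\<in>C. if f p = i then v p * (p \<bullet> b) else 0)"
    for i
    unfolding inner_sum_left using assms by (simp add: sum.inter_filter)
  ultimately show ?thesis by simp
qed

text \<open>Conic Caratheodory on the Tv(d, r) equations above.\<close>
lemma tverberg_core_card_le:
  fixes S :: "'a::euclidean_space set"
  assumes "finite S" "tverberg_core S r f C"
  shows "\<exists>C'. tverberg_core S r f C' \<and> card C' \<le> Tv DIM('a) r"
proof -
  obtain x where "\<forall>j<r. x \<in> convex hull {p\<in>C. f p = j}" and "C \<subseteq> S" "\<forall>p\<in>S. f p < r"
    using assms(2) by (auto simp: tverberg_core_def)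
  have "finite C" using \<open>C \<subseteq> S\<close> assms(1) by (rule finite_subset)
  let ?block = "\<lambda>j. {p\<in>C. f p = j}"
  define bary where "bary v j = (\<Sum>p\<in>?block j. v p *\<^sub>R p)" for v :: "'a \<Rightarrow> real" and j
  obtain l where l: "\<forall>p\<in>C. 0 \<le> l p" "\<forall>j<r. sum l (?block j) = 1 \<and> bary l j = x"
    using common_point_block_weights[OF \<open>finite C\<close> \<open>\<forall>j<r. x \<in> _\<close>] by (auto simp: bary_def)
  define E :: "(nat + nat \<times> 'a) set" where "E = {..<r} <+> ({1..<r} \<times> Basis)"
  obtain l' where l': "\<forall>p\<in>C. 0 \<le> l' p"
    "\<forall>e\<in>E. (\<Sum>p\<in>C. tverberg_equation f e p * l' p) = (\<Sum>p\<in>C. tverberg_equation f e p * l p)"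
    "card {p\<in>C. l' p \<noteq> 0} \<le> card E"
    using conic_caratheodory[of E C l "tverberg_equation f"] \<open>finite C\<close> l(1) by (auto simp: E_def)
  have sums: "\<forall>j<r. sum l' (?block j) = 1"
  proof (intro allI impI)
    fix j assume "j < r"
    then have "Inl j \<in> E" by (auto simp: E_def)
    from bspec[OF l'(2) this] show "sum l' (?block j) = 1"
      using l(2) \<open>j < r\<close> by (simp only: sum_tverberg_equation_Inl[OF \<open>finite C\<close>])
  qed
  have barys: "\<forall>j<r. bary l' j = bary l' 0"
  proof (intro allI impI)
    fix j assume "j < r"
    show "bary l' j = bary l' 0"
    proof (rule euclidean_eqI)
      fix b :: 'a assume "b \<in> Basis"
      show "bary l' j \<bullet> b = bary l' 0 \<bullet> b"
      proof (cases "j = 0")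
        case False
        then have "Inr (j, b) \<in> E" using \<open>j < r\<close> \<open>b \<in> Basis\<close> by (auto simp: E_def)
        from bspec[OF l'(2) this]
        have "bary l' j \<bullet> b - bary l' 0 \<bullet> b = bary l j \<bullet> b - bary l 0 \<bullet> b"
          by (simp only: sum_tverberg_equation_Inr[OF \<open>finite C\<close>] bary_def)
        moreover have "bary l j = x" "bary l 0 = x" using l(2) \<open>j < r\<close> by auto
        ultimately show ?thesis by simp
      qed simp
    qed
  qed
  have "tverberg_core S r f {p\<in>C. l' p \<noteq> 0}"
    by (rule tverberg_core_of_block_weights[OF \<open>C \<subseteq> S\<close> \<open>finite C\<close> \<open>\<forall>p\<in>S. f p < r\<close> l'(1) sums
          barys[unfolded bary_def]])
  moreover have "card E \<le> Tv DIM('a) r"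
    by (cases r) (simp_all add: E_def card_Plus card_cartesian_product Tv_def algebra_simps)
  ultimately show ?thesis using l'(3) by (intro exI) (erule conjI, simp)
qed

text \<open>Sarkaria's tensor trick: the point p with label j becomes (p, 1) tensored with
  e_j - (e_0 + ... + e_(r-1)) / r; the index i runs over the r tensor copies.\<close>
definition sarkaria_vector :: "nat \<Rightarrow> 'a::real_vector \<Rightarrow> nat \<Rightarrow> nat \<Rightarrow> 'a \<times> real" where
  "sarkaria_vector r p j i = ((if i = j then 1 else 0) - 1 / real r) *\<^sub>R (p, 1)"

lemma sum_sarkaria_vector_copies:
  assumes "j < r"
  shows "(\<Sum>i<r. sarkaria_vector r p j i) = 0"
proof -
  have "(\<Sum>i<r. (if i = j then 1 else 0) - 1 / real r) = 0" using assms by (simp add: sum_subtractf)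
  then show ?thesis unfolding sarkaria_vector_def scaleR_sum_left[symmetric] by (simp add: zero_prod_def)
qed

lemma sum_sarkaria_vector_labels:
  assumes "i < r"
  shows "(\<Sum>j<r. sarkaria_vector r p j i) = 0"
proof -
  have "(\<Sum>j<r. (if i = j then 1 else 0) - 1 / real r) = 0" using assms by (simp add: sum_subtractf)
  then show ?thesis unfolding sarkaria_vector_def scaleR_sum_left[symmetric] by (simp add: zero_prod_def)
qed

lemma tverberg_core_of_sarkaria_sum_zero:
  assumes "finite K" "0 < r" "weighted_choice r K h l"
    and "\<forall>i<r. colorful_sum K (sarkaria_vector r) h l i = 0"
  shows "tverberg_core K r h K"
proof -
  define y where "y = (\<Sum>k\<in>K. l k *\<^sub>R k)"
  have "y \<in> convex hull {k\<in>K. h k = j}" if "j < r" for j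
  proof -
    let ?B = "{k\<in>K. h k = j}"
    have "colorful_sum K (sarkaria_vector r) h l j
        = (\<Sum>k\<in>K. (if h k = j then l k *\<^sub>R (k, 1::real) else 0) - (1 / real r) *\<^sub>R (l k *\<^sub>R (k, 1::real)))"
      unfolding colorful_sum_def sarkaria_vector_def
      by (rule sum.cong) (auto simp: scaleR_diff_left scaleR_diff_right right_diff_distrib)
    also have "\<dots> = (\<Sum>k\<in>?B. l k *\<^sub>R (k, 1::real)) - (1 / real r) *\<^sub>R (\<Sum>k\<in>K. l k *\<^sub>R (k, 1::real))"
      using assms(1) by (simp add: sum_subtractf scaleR_sum_right sum.inter_filter cong: if_cong)
    finally have "colorful_sum K (sarkaria_vector r) h l j
        = (\<Sum>k\<in>?B. l k *\<^sub>R (k, 1::real)) - (1 / real r) *\<^sub>R (\<Sum>k\<in>K. l k *\<^sub>R (k, 1::real))" .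
    moreover have "(\<Sum>k\<in>K. l k *\<^sub>R (k, 1::real)) = (y, 1::real)"
      using assms(3) by (simp add: y_def weighted_choice_def prod_eq_iff fst_sum snd_sum)
    ultimately have "(\<Sum>k\<in>?B. l k *\<^sub>R (k, 1::real)) = (1 / real r) *\<^sub>R (y, 1::real)"
      using assms(4) that by simp
    then have "sum l ?B = 1 / real r" "(\<Sum>k\<in>?B. l k *\<^sub>R k) = (1 / real r) *\<^sub>R y"
      by (simp_all add: prod_eq_iff fst_sum snd_sum)
    moreover have "(\<Sum>k\<in>?B. (real r * l k) *\<^sub>R k) = real r *\<^sub>R (\<Sum>k\<in>?B. l k *\<^sub>R k)"
      by (simp add: scaleR_sum_right)
    ultimately have "sum (\<lambda>k. real r * l k) ?B = 1" "(\<Sum>k\<in>?B. (real r * l k) *\<^sub>R k) = y"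
      using assms(2) by (simp_all add: sum_distrib_left[symmetric])
    moreover have "\<forall>k\<in>?B. 0 \<le> real r * l k" using assms(3) by (simp add: weighted_choice_def)
    ultimately show ?thesis using assms(1) by (subst convex_hull_finite) auto
  qed
  then show ?thesis using assms(3) by (auto simp: tverberg_core_def weighted_choice_def)
qed

theorem tverberg:
  fixes K :: "'a::euclidean_space set"
  assumes "finite K" "0 < r" "Tv DIM('a) r \<le> card K"
  shows "\<exists>h. tverberg_core K r h K"
proof -
  have "(r - 1) * DIM('a \<times> real) < card K"
    using assms(3) by (simp add: Tv_def algebra_simps)
  then obtain h l where "weighted_choice r K h l" "\<forall>i<r. colorful_sum K (sarkaria_vector r) h l i = 0"
    using colorful_caratheodory[OF assms(1,2), of r "sarkaria_vector r"]
      sum_sarkaria_vector_copies sum_sarkaria_vector_labels by blast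
  then show ?thesis using tverberg_core_of_sarkaria_sum_zero assms(1,2) by blast
qed

lemma tverberg_core_permute_labels:
  assumes "tverberg_core S r h C" "bij_betw \<sigma> {..<r} {..<r}"
  shows "tverberg_core S r (\<sigma> \<circ> h) C"
proof -
  obtain x where x: "\<forall>j<r. x \<in> convex hull {p\<in>C. h p = j}" and "C \<subseteq> S" "\<forall>p\<in>S. h p < r"
    using assms(1) by (auto simp: tverberg_core_def)
  have "{p\<in>C. \<sigma> (h p) = j} = {p\<in>C. h p = inv_into {..<r} \<sigma> j}" if "j < r" for j
    using \<open>C \<subseteq> S\<close> \<open>\<forall>p\<in>S. h p < r\<close> that assms(2)
    by (auto simp: bij_betw_inv_into_left bij_betw_inv_into_right)
  moreover have "inv_into {..<r} \<sigma> j < r" if "j < r" for j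
    using bij_betw_apply[OF bij_betw_inv_into[OF assms(2)]] that by simp
  ultimately have "\<forall>j<r. x \<in> convex hull {p\<in>C. (\<sigma> \<circ> h) p = j}" using x by simp
  moreover have "\<forall>p\<in>S. (\<sigma> \<circ> h) p < r"
    using \<open>\<forall>p\<in>S. h p < r\<close> bij_betw_apply[OF assms(2)] by simp
  ultimately show ?thesis using \<open>C \<subseteq> S\<close> by (auto simp: tverberg_core_def)
qed

lemma tverberg_core_agreeing_on_one_point:
  fixes K :: "'a::euclidean_space set"
  assumes "finite K" "0 < r" "Tv DIM('a) r \<le> card K" "card (K \<inter> C) \<le> 1" "\<forall>p\<in>C. f p < r"
  shows "\<exists>h. tverberg_core K r h K \<and> (\<forall>p\<in>K \<inter> C. h p = f p)"
proof -
  obtain h where h: "tverberg_core K r h K" using tverberg[OF assms(1-3)] by blast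
  show ?thesis
  proof (cases "K \<inter> C = {}")
    case False
    moreover have "finite (K \<inter> C)" using assms(1) by simp
    ultimately have "card (K \<inter> C) = 1" using assms(4) by (simp add: le_Suc_eq)
    then obtain c where c: "K \<inter> C = {c}" by (rule card_1_singletonE)
    define \<sigma> where "\<sigma> = id(h c := f c, f c := h c)"
    have "h c < r" "f c < r" using h c assms(5) by (auto simp: tverberg_core_def)
    then have "bij_betw \<sigma> {..<r} {..<r}"
      by (intro bij_betw_byWitness[of _ \<sigma>]) (auto simp: \<sigma>_def)
    then have "tverberg_core K r (\<sigma> \<circ> h) K" by (rule tverberg_core_permute_labels[OF h])
    moreover have "(\<sigma> \<circ> h) c = f c" by (simp add: \<sigma>_def)
    ultimately show ?thesis using c by auto
  qed (use h in blast)
qed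

lemma tverberg_core_extend:
  assumes "tverberg_core K r h K" "K \<subseteq> S" "\<forall>p\<in>S. g p < r" "\<forall>p\<in>K. g p = h p"
  shows "tverberg_core S r g K"
proof -
  have "{p\<in>K. g p = j} = {p\<in>K. h p = j}" for j using assms(4) by auto
  then show ?thesis using assms(1-3) by (simp add: tverberg_core_def)
qed

lemma exists_subset_avoiding_small_sets:
  assumes "finite S" "C \<subseteq> S" "C' \<subseteq> S" "card C \<le> N" "card C' \<le> N" "3 * N - 1 \<le> card S" "1 \<le> N"
  shows "\<exists>K\<subseteq>S. K \<inter> C' = {} \<and> N \<le> card K \<and> card (K \<inter> C) \<le> 1"
proof -
  define D where "D = S - (C \<union> C')"
  have "finite D" using assms(1) by (simp add: D_def)
  have card_D: "card D = card S - card (C \<union> C')"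
    unfolding D_def using assms(1-3) by (intro card_Diff_subset) (auto intro: finite_subset)
  have "card (C \<union> C') \<le> card C + card C'" by (rule card_Un_le)
  show ?thesis
  proof (cases "N \<le> card D")
    case True
    then obtain K where "K \<subseteq> D" "card K = N" using obtain_subset_with_card_n by blast
    moreover have "K \<inter> C = {}" using \<open>K \<subseteq> D\<close> by (auto simp: D_def)
    ultimately show ?thesis by (intro exI[of _ K]) (auto simp: D_def)
  next
    case False
    \<comment> \<open>then C and C' are nearly disjoint, and D plus one point of C - C' is large enough\<close>
    have "card (C \<union> C') \<le> card S" using assms(1-3) by (intro card_mono) auto
    then have "2 * N \<le> card (C \<union> C')" using False card_D assms(6) by linarith
    have "\<not> C \<subseteq> C'"
    proof
      assume "C \<subseteq> C'"
      then have "C \<union> C' = C'" by blast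
      then show False using \<open>2 * N \<le> card (C \<union> C')\<close> assms(5,7) by simp
    qed
    then obtain c where c: "c \<in> C" "c \<notin> C'" by blast
    then have "c \<notin> D" by (simp add: D_def)
    then have "card (insert c D) = card D + 1" using \<open>finite D\<close> by simp
    moreover have "N - 1 \<le> card D" using card_D assms(4-6) \<open>card (C \<union> C') \<le> card C + card C'\<close>
      by linarith
    moreover have "insert c D \<inter> C = {c}" "insert c D \<subseteq> S" "insert c D \<inter> C' = {}"
      using c assms(2) by (auto simp: D_def)
    ultimately show ?thesis using assms(7) by (intro exI[of _ "insert c D"]) auto
  qed
qed

lemma tverberg_path_through_core:
  assumes "finite S" "tverberg_core S r f C" "tverberg_core S r f' C'"
    and "tverberg_core K r h K" "K \<subseteq> S" "K \<inter> C' = {}" "\<forall>p\<in>K \<inter> C. h p = f p"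
  shows "(label_blocks S r f, label_blocks S r f') \<in> (tverberg_graph_edges S r)\<^sup>*"
proof -
  \<comment> \<open>relabel K by h (core C), switch S - K from f to f' (core K), relabel K by f' (core C')\<close>
  define g where "g = (\<lambda>p. if p \<in> K then h p else f p)"
  define g' where "g' = (\<lambda>p. if p \<in> K then h p else f' p)"
  have "\<forall>p\<in>S. g p < r" "\<forall>p\<in>S. g' p < r"
    using assms(2-4) by (auto simp: g_def g'_def tverberg_core_def)
  have "tverberg_core S r g K"
    using tverberg_core_extend[OF assms(4,5) \<open>\<forall>p\<in>S. g p < r\<close>] by (simp add: g_def)
  have "\<forall>p\<in>C'. g' p = f' p" using assms(6) by (auto simp: g'_def)
  then have "tverberg_core S r g' C'" by (rule tverberg_core_relabel[OF assms(3) \<open>\<forall>p\<in>S. g' p < r\<close>])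
  have "\<forall>p\<in>C. g p = f p" using assms(7) by (simp add: g_def)
  then have "(label_blocks S r f, label_blocks S r g) \<in> (tverberg_graph_edges S r)\<^sup>*"
    using tverberg_path_relabel_outside_core[OF assms(1,2) \<open>\<forall>p\<in>S. g p < r\<close>] by simp
  also have "(label_blocks S r g, label_blocks S r g') \<in> (tverberg_graph_edges S r)\<^sup>*"
    using tverberg_path_relabel_outside_core[OF assms(1) \<open>tverberg_core S r g K\<close> \<open>\<forall>p\<in>S. g' p < r\<close>]
    by (simp add: g_def g'_def)
  also have "(label_blocks S r g', label_blocks S r f') \<in> (tverberg_graph_edges S r)\<^sup>*"
    using tverberg_path_relabel_outside_core[OF assms(1) \<open>tverberg_core S r g' C'\<close>]
      \<open>\<forall>p\<in>C'. g' p = f' p\<close> assms(3) by (simp add: tverberg_core_def)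
  finally show ?thesis .
qed

theorem theorem1p3:
  fixes S :: "('a::euclidean_space) set" and r :: nat
  assumes "r \<ge> 1"
    and "finite S"
    and "card S \<ge> 3 * Tv DIM('a) r - 1"
  shows "tverberg_graph_connected S r"
  unfolding tverberg_graph_connected_def
proof (intro allI impI)
  fix P P' assume "tverberg_partition S r P" "tverberg_partition S r P'"
  then obtain f f' where f: "tverberg_core S r f S" "label_blocks S r f = P"
    and f': "tverberg_core S r f' S" "label_blocks S r f' = P'"
    using tverberg_partition_imp_labelling by metis
  obtain C C' where C: "tverberg_core S r f C" "card C \<le> Tv DIM('a) r"
    and C': "tverberg_core S r f' C'" "card C' \<le> Tv DIM('a) r"
    using tverberg_core_card_le[OF assms(2)] f(1) f'(1) by metis
  obtain K where K: "K \<subseteq> S" "K \<inter> C' = {}" "Tv DIM('a) r \<le> card K" "card (K \<inter> C) \<le> 1"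
    using exists_subset_avoiding_small_sets[OF assms(2) _ _ C(2) C'(2) assms(3)] C(1) C'(1)
    by (auto simp: tverberg_core_def Tv_def)
  have "finite K" using K(1) assms(2) by (rule finite_subset)
  moreover have "\<forall>p\<in>C. f p < r" using C(1) by (auto simp: tverberg_core_def)
  ultimately obtain h where h: "tverberg_core K r h K" "\<forall>p\<in>K \<inter> C. h p = f p"
    using tverberg_core_agreeing_on_one_point K(3,4) assms(1) by (metis One_nat_def Suc_le_eq)
  show "(P, P') \<in> (tverberg_graph_edges S r)\<^sup>*"
    using tverberg_path_through_core[OF assms(2) C(1) C'(1) h(1) K(1,2) h(2)] f(2) f'(2) by simp
qed

end
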